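(* Let $\rho\in\mathbb R_+^C$ and $\varepsilon\in\mathbb R_+$ with $\sum_{c=1}^C\widehat p_c\rho_c\le\varepsilon$, and let $w\in\mathcal W$. For each $c$, let $\gamma_c^\star>0$ be a solution of \[\Psi\big(\widehat\theta_c-\gamma^{-1}\lambda(w,\widehat x_c)\big)+\gamma^{-1}\big\langle\nabla\Psi\big(\widehat\theta_c-\gamma^{-1}\lambda(w,\widehat x_c)\big),\lambda(w,\widehat x_c)\big\rangle=\Psi(\widehat\theta_c)-\rho_c,\] set $\theta_c^\star=\widehat\theta_c-\lambda(w,\widehat x_c)/\gamma_c^\star$, let $\mathbb Q^\star_{Y|\widehat x_c}$ be the distribution with density $f(\cdot|\theta_c^\star)$, and $t_c^\star=\Psi(\lambda(w,\widehat x_c))-\langle\nabla\Psi(\theta_c^\star),\lambda(w,\widehat x_c)\rangle$. Let $\alpha^\star\in\mathbb R$, $\beta^\star>0$ solve \[\sum_{c=1}^C\widehat p_c\exp\big(\beta^{-1}(t_c^\star-\alpha)-\rho_c-1\big)-1=0,\qquad\sum_{c=1}^C\widehat p_c(t_c^\star-\alpha)\exp\big(\beta^{-1}(t_c^\star-\alpha)-\rho_c-1\big)-(\varepsilon+1)\beta=0.\] Then the worst-case distribution $\arg\max_{\mathbb Q\in\mathbb B(\widehat{\mathbb P})}\mathbb E_{\mathbb Q}[\ell_\lambda(X,Y,w)]$ is \[\mathbb Q^\star=\sum_{c=1}^C\widehat p_c\exp\big((\beta^\star)^{-1}(t_c^\star-\alpha^\star)-\rho_c-1\big)\,\delta_{\widehat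 x_c}\otimes\mathbb Q^\star_{Y|\widehat x_c},\] i.e. $\mathbb Q^\star\in\mathbb B(\widehat{\mathbb P})$ and $\mathbb E_{\mathbb Q^\star}[\ell_\lambda(X,Y,w)]=\max_{\mathbb Q\in\mathbb B(\widehat{\mathbb P})}\mathbb E_{\mathbb Q}[\ell_\lambda(X,Y,w)]$.
   Context: Exponential family: $\nu$ a measure on $\mathcal Y\subseteq\mathbb R^m$, $h\ge0$, $T:\mathcal Y\to\mathbb R^p$; $f(y|\theta)=h(y)\exp(\langle\theta,T(y)\rangle-\Psi(\theta))$ density w.r.t. $\nu$; $\Theta=\{\theta\in\mathbb R^p:\int he^{\langle\theta,T\rangle}d\nu<\infty\}$, $\Psi(\theta)=\log\int he^{\langle\theta,T\rangle}d\nu$; regular family ($\Theta$ open, $T_i$ affinely independent). $\mathcal X\subseteq\mathbb R^n$, $\mathcal W$ finite-dimensional, $\lambda:\mathcal W\times\mathcal X\to\Theta$ jointly continuous; $\ell_\lambda(x,y,w)=\Psi(\lambda(w,x))-\langle T(y),\lambda(w,x)\rangle$. Distinct $\widehat x_1,\dots,\widehat x_C\in\mathcal X$. Nominal distribution $\widehat{\mathbb P}$: marginal $\sum_c\widehat p_c\delta_{\widehat x_c}$ ($\widehat p\in\mathbb R_+^C$ summing to 1), conditional at $\widehat x_c$ with density $f(\cdot|\widehat\theta_c)$, $\widehat\theta_c\in\Theta$. KL divergence $\mathrm{KL}(\mathbb P_1\|\mathbb P_2)=\mathbb E_{\mathbb P_1}[\log d\mathbb P_1/d\mathbb P_2]$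 if $\mathbb P_1\ll\mathbb P_2$, else $+\infty$. Ambiguity set $\mathbb B(\widehat{\mathbb P})$: all probability measures $\mathbb Q$ on $\mathcal X\times\mathcal Y$ for which there exist a probability measure $\mathbb Q_X$ on $\mathcal X$ and $\theta_c\in\Theta$ such that, with $\mathbb Q_{Y|\widehat x_c}$ having density $f(\cdot|\theta_c)$: $\mathbb Q(\{\widehat x_c\}\times A)=\mathbb Q_X(\{\widehat x_c\})\mathbb Q_{Y|\widehat x_c}(A)$ for all $c$ and measurable $A$; $\mathrm{KL}(\mathbb Q_{Y|\widehat x_c}\|\widehat{\mathbb P}_{Y|\widehat x_c})\le\rho_c$; $\mathrm{KL}(\mathbb Q_X\|\widehat{\mathbb P}_X)+\sum_c\rho_c\mathbb Q_X(\{\widehat x_c\})\le\varepsilon$. *)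

theory Defs
  imports "HOL-Probability.Probability"
begin

definition expfam_norm :: "'y measure \<Rightarrow> ('y \<Rightarrow> real) \<Rightarrow> ('y \<Rightarrow> 'p::real_inner) \<Rightarrow> 'p \<Rightarrow> ennreal" where
  "expfam_norm nu h T \<theta> = (\<integral>\<^sup>+ y. ennreal (h y * exp (\<theta> \<bullet> T y)) \<partial>nu)"

definition expfam_Theta :: "'y measure \<Rightarrow> ('y \<Rightarrow> real) \<Rightarrow> ('y \<Rightarrow> 'p::real_inner) \<Rightarrow> 'p set" where
  "expfam_Theta nu h T = {\<theta>. expfam_norm nu h T \<theta> < \<infinity>}"

definition expfam_Psi :: "'y measure \<Rightarrow> ('y \<Rightarrow> real) \<Rightarrow> ('y \<Rightarrow> 'p::real_inner) \<Rightarrow> 'p \<Rightarrow> real" where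
  "expfam_Psi nu h T \<theta> = ln (enn2real (expfam_norm nu h T \<theta>))"

definition expfam_gradPsi :: "'y measure \<Rightarrow> ('y \<Rightarrow> real) \<Rightarrow> ('y \<Rightarrow> 'p::real_inner) \<Rightarrow> 'p \<Rightarrow> 'p" where
  "expfam_gradPsi nu h T \<theta> = (SOME g. GDERIV (expfam_Psi nu h T) \<theta> :> g)"

definition expfam_dens :: "'y measure \<Rightarrow> ('y \<Rightarrow> real) \<Rightarrow> ('y \<Rightarrow> 'p::real_inner) \<Rightarrow> 'p \<Rightarrow> 'y \<Rightarrow> real" where
  "expfam_dens nu h T \<theta> y = h y * exp (\<theta> \<bullet> T y - expfam_Psi nu h T \<theta>)"

definition expfam_dist :: "'y measure \<Rightarrow> ('y \<Rightarrow> real) \<Rightarrow> ('y \<Rightarrow> 'p::real_inner) \<Rightarrow> 'p \<Rightarrow> 'y measure" where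
  "expfam_dist nu h T \<theta> = density nu (\<lambda>y. ennreal (expfam_dens nu h T \<theta> y))"

text \<open>Regular family: Theta open and the components of T affinely independent, i.e. no
  nontrivial affine relation a . T(y) = b holds almost everywhere w.r.t. h d nu.\<close>
definition regular_expfam :: "'y measure \<Rightarrow> ('y \<Rightarrow> real) \<Rightarrow> ('y \<Rightarrow> 'p::real_inner) \<Rightarrow> bool" where
  "regular_expfam nu h T \<longleftrightarrow> open (expfam_Theta nu h T) \<and>
     (\<forall>a b. (AE y in nu. h y > 0 \<longrightarrow> a \<bullet> T y = b) \<longrightarrow> a = 0)"

definition KL_div :: "'a measure \<Rightarrow> 'a measure \<Rightarrow> ereal" where
  "KL_div P1 P2 =
    (if sets P1 = sets P2 \<and> absolutely_continuous P2 P1 then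
       (let D = (\<lambda>x. ln (enn2real (RN_deriv P2 P1 x))) in
          enn2ereal (\<integral>\<^sup>+ x. ennreal (max 0 (D x)) \<partial>P1)
        - enn2ereal (\<integral>\<^sup>+ x. ennreal (max 0 (- D x)) \<partial>P1))
     else \<infinity>)"

definition ell_loss :: "'y measure \<Rightarrow> ('y \<Rightarrow> real) \<Rightarrow> ('y \<Rightarrow> 'p::real_inner)
    \<Rightarrow> ('w \<Rightarrow> 'x \<Rightarrow> 'p) \<Rightarrow> 'x \<Rightarrow> 'y \<Rightarrow> 'w \<Rightarrow> real" where
  "ell_loss nu h T lam x y w = expfam_Psi nu h T (lam w x) - T y \<bullet> lam w x"

definition nominal_X :: "'x measure \<Rightarrow> nat \<Rightarrow> (nat \<Rightarrow> 'x) \<Rightarrow> (nat \<Rightarrow> real) \<Rightarrow> 'x measure" where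
  "nominal_X MX C xhat phat =
     measure_of (space MX) (sets MX) (\<lambda>A. \<Sum>c<C. ennreal (phat c) * indicator A (xhat c))"

definition ambiguity_set :: "'y measure \<Rightarrow> ('y \<Rightarrow> real) \<Rightarrow> ('y \<Rightarrow> 'p::real_inner) \<Rightarrow> 'x measure
    \<Rightarrow> nat \<Rightarrow> (nat \<Rightarrow> 'x) \<Rightarrow> (nat \<Rightarrow> real) \<Rightarrow> (nat \<Rightarrow> 'p) \<Rightarrow> (nat \<Rightarrow> real) \<Rightarrow> real
    \<Rightarrow> ('x \<times> 'y) measure set" where
  "ambiguity_set nu h T MX C xhat phat thetahat rho eps =
     {Q. prob_space Q \<and> sets Q = sets (MX \<Otimes>\<^sub>M nu) \<and>
        (\<exists>QX \<theta>. prob_space QX \<and> sets QX = sets MX \<and>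
           (\<forall>c<C. \<theta> c \<in> expfam_Theta nu h T) \<and>
           (\<forall>c<C. \<forall>A\<in>sets nu.
               emeasure Q ({xhat c} \<times> A) = emeasure QX {xhat c} * emeasure (expfam_dist nu h T (\<theta> c)) A) \<and>
           (\<forall>c<C. KL_div (expfam_dist nu h T (\<theta> c)) (expfam_dist nu h T (thetahat c)) \<le> ereal (rho c)) \<and>
           KL_div QX (nominal_X MX C xhat phat) + ereal (\<Sum>c<C. rho c * measure QX {xhat c}) \<le> ereal eps)}"

definition mixture_dist :: "'x measure \<Rightarrow> 'y measure \<Rightarrow> nat \<Rightarrow> (nat \<Rightarrow> 'x) \<Rightarrow> (nat \<Rightarrow> real)
    \<Rightarrow> (nat \<Rightarrow> 'y measure) \<Rightarrow> ('x \<times> 'y) measure" where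
  "mixture_dist MX nu C xhat q K =
     measure_of (space (MX \<Otimes>\<^sub>M nu)) (sets (MX \<Otimes>\<^sub>M nu))
       (\<lambda>S. \<Sum>c<C. ennreal (q c) * emeasure (return MX (xhat c) \<Otimes>\<^sub>M K c) S)"

end

(*
  Psi is differentiable on Theta with gradient mean theta = E_theta[T], and the KL divergence
  between two members of the family is the Bregman divergence of Psi.  Under the conditional with
  parameter theta the expected loss at xhat_c is Psi(lambda_c) - <mean theta, lambda_c>.  Adding
  the constraint KL(theta || thetahat_c) <= rho_c to the tangent inequality of the convex function
  Psi at theta, evaluated at theta*_c = thetahat_c - lambda_c / gamma*_c, and using the equation
  for gamma*_c (which says KL(theta*_c || thetahat_c) = rho_c) gives
  <mean theta*_c, lambda_c> <= <mean theta, lambda_c>: each conditional contributes at most t*_c.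

  Finite KL divergence from the nominal marginal forces the X-marginal onto the atoms, so the
  ambiguity set is the set of mixtures sum_c r_c delta_(xhat_c) (x) P_(theta_c) with
  KL(r || phat) + sum_c rho_c r_c <= eps.  The Fenchel-Young inequality
  r a <= r ln (r / p) + p e^a - r with a_c = (t*_c - alpha) / beta - rho_c - 1 bounds
  sum_c r_c t*_c by its value at the tilted weights phat_c e^(a_c); the equations for alpha and
  beta say that these weights form a probability vector exhausting the budget.
*)
theory Submission
  imports Defs
begin

section \<open>Finite mixtures of measures\<close>

definition finite_mixture :: "'a measure \<Rightarrow> nat \<Rightarrow> (nat \<Rightarrow> real) \<Rightarrow> (nat \<Rightarrow> 'a measure) \<Rightarrow> 'a measure" where
  "finite_mixture R C q N = measure_of (space R) (sets R) (\<lambda>S. \<Sum>c<C. ennreal (q c) * emeasure (N c) S)"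

lemma sets_finite_mixture [simp, measurable_cong]: "sets (finite_mixture R C q N) = sets R"
  by (simp add: finite_mixture_def sets.space_closed)

lemma space_finite_mixture [simp]: "space (finite_mixture R C q N) = space R"
  using sets_finite_mixture by (rule sets_eq_imp_space_eq)

lemma sum_ennreal_mult_eq:
  assumes "\<forall>c\<in>I. q c \<ge> 0" and "\<forall>c\<in>I. a c \<noteq> \<infinity>"
  shows "(\<Sum>c\<in>I. ennreal (q c) * a c) = ennreal (\<Sum>c\<in>I. q c * enn2real (a c))"
proof -
  have "(\<Sum>c\<in>I. ennreal (q c) * a c) = (\<Sum>c\<in>I. ennreal (q c * enn2real (a c)))"
    using assms by (intro sum.cong refl) (simp add: ennreal_mult ennreal_enn2real_if)
  also have "\<dots> = ennreal (\<Sum>c\<in>I. q c * enn2real (a c))"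
    using assms by (intro sum_ennreal) auto
  finally show ?thesis .
qed

context
  fixes R :: "'a measure" and C :: nat and q :: "nat \<Rightarrow> real" and N :: "nat \<Rightarrow> 'a measure"
  assumes C_pos: "C > 0" and q_nonneg: "\<forall>c<C. q c \<ge> 0"
    and N_subprob: "\<forall>c<C. N c \<in> space (subprob_algebra R)"
begin

private abbreviation "weights \<equiv> point_measure {..<C} (\<lambda>c. ennreal (q c))"

private lemma N_measurable: "N \<in> measurable weights (subprob_algebra R)"
  unfolding measurable_point_measure_eq1 using N_subprob by (simp add: Pi_iff)

private lemma space_weights: "space weights \<noteq> {}"
  using C_pos by (auto simp: space_point_measure)

private lemma emeasure_bind_weights:
  "S \<in> sets R \<Longrightarrow> emeasure (weights \<bind> N) S = (\<Sum>c<C. ennreal (q c) * emeasure (N c) S)"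
  by (simp add: emeasure_bind[OF space_weights N_measurable] nn_integral_point_measure_finite)

lemma finite_mixture_eq_bind: "finite_mixture R C q N = weights \<bind> N"
proof -
  have sets_bind: "sets (weights \<bind> N) = sets R"
    using N_subprob space_weights
    by (intro sets_bind) (auto simp: space_point_measure space_subprob_algebra)
  have "finite_mixture R C q N = measure_of (space R) (sets R) (emeasure (weights \<bind> N))"
    unfolding finite_mixture_def
    by (rule measure_of_eq[OF sets.space_closed])
       (simp add: sets.sigma_sets_eq emeasure_bind_weights)
  also have "\<dots> = weights \<bind> N"
    using measure_of_of_measure[of "weights \<bind> N"] sets_bind sets_eq_imp_space_eq[OF sets_bind]
    by simp
  finally show ?thesis .
qed

lemma emeasure_finite_mixture:
  "S \<in> sets R \<Longrightarrow> emeasure (finite_mixture R C q N) S = (\<Sum>c<C. ennreal (q c) * emeasure (N c) S)"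
  unfolding finite_mixture_eq_bind by (rule emeasure_bind_weights)

lemma nn_integral_finite_mixture:
  assumes "f \<in> borel_measurable R"
  shows "(\<integral>\<^sup>+x. f x \<partial>finite_mixture R C q N) = (\<Sum>c<C. ennreal (q c) * (\<integral>\<^sup>+x. f x \<partial>N c))"
  unfolding finite_mixture_eq_bind nn_integral_bind[OF assms N_measurable]
  by (simp add: nn_integral_point_measure_finite)

lemma integral_finite_mixture:
  fixes f :: "'a \<Rightarrow> real"
  assumes f: "f \<in> borel_measurable R" and f_int: "\<forall>c<C. integrable (N c) f"
  shows "integrable (finite_mixture R C q N) f"
    and "(\<integral>x. f x \<partial>finite_mixture R C q N) = (\<Sum>c<C. q c * (\<integral>x. f x \<partial>N c))"
proof -
  have parts: "(\<integral>\<^sup>+x. ennreal (g x) \<partial>finite_mixture R C q N)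
      = ennreal (\<Sum>c<C. q c * enn2real (\<integral>\<^sup>+x. ennreal (g x) \<partial>N c))"
    if "g \<in> borel_measurable R" "\<forall>c<C. (\<integral>\<^sup>+x. ennreal (g x) \<partial>N c) \<noteq> \<infinity>" for g
    using that q_nonneg by (simp add: nn_integral_finite_mixture sum_ennreal_mult_eq)
  have pos: "(\<integral>\<^sup>+x. ennreal (f x) \<partial>finite_mixture R C q N)
      = ennreal (\<Sum>c<C. q c * enn2real (\<integral>\<^sup>+x. ennreal (f x) \<partial>N c))"
    using f f_int integrableD(2) by (intro parts) auto
  have neg: "(\<integral>\<^sup>+x. ennreal (- f x) \<partial>finite_mixture R C q N)
      = ennreal (\<Sum>c<C. q c * enn2real (\<integral>\<^sup>+x. ennreal (- f x) \<partial>N c))"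
    using f f_int integrableD(3) by (intro parts) auto
  show int: "integrable (finite_mixture R C q N) f"
    using f by (simp add: real_integrable_def pos neg)
  have "(\<integral>x. f x \<partial>finite_mixture R C q N)
      = (\<Sum>c<C. q c * enn2real (\<integral>\<^sup>+x. ennreal (f x) \<partial>N c))
        - (\<Sum>c<C. q c * enn2real (\<integral>\<^sup>+x. ennreal (- f x) \<partial>N c))"
  proof -
    have "0 \<le> (\<Sum>c<C. q c * enn2real (a c))" for a :: "nat \<Rightarrow> ennreal"
      using q_nonneg by (intro sum_nonneg) auto
    then show ?thesis by (simp add: real_lebesgue_integral_def[OF int] pos neg)
  qed
  also have "\<dots> = (\<Sum>c<C. q c * (\<integral>x. f x \<partial>N c))"
    using f_int by (simp add: real_lebesgue_integral_def sum_subtractf[symmetric] right_diff_distrib)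
  finally show "(\<integral>x. f x \<partial>finite_mixture R C q N) = (\<Sum>c<C. q c * (\<integral>x. f x \<partial>N c))" .
qed

lemma prob_space_finite_mixture:
  assumes "\<forall>c<C. prob_space (N c)" and "(\<Sum>c<C. q c) = 1"
  shows "prob_space (finite_mixture R C q N)"
proof
  have "emeasure (finite_mixture R C q N) (space R) = (\<Sum>c<C. ennreal (q c))"
  proof -
    have "emeasure (N c) (space R) = 1" if "c < C" for c
      using that assms(1) N_subprob prob_space.emeasure_space_1[of "N c"] sets_eq_imp_space_eq[of "N c" R]
      by (auto simp: space_subprob_algebra)
    then show ?thesis by (simp add: emeasure_finite_mixture)
  qed
  also have "\<dots> = 1"
    using assms(2) q_nonneg by (subst sum_ennreal) auto
  finally show "emeasure (finite_mixture R C q N) (space (finite_mixture R C q N)) = 1" by simp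
qed

end

lemma return_pair_measure_eq_distr:
  assumes x: "x \<in> space M" and K: "sets K = sets N" and "sigma_finite_measure K"
  shows "return M x \<Otimes>\<^sub>M K = distr K (M \<Otimes>\<^sub>M N) (Pair x)"
proof (rule measure_eqI)
  interpret sigma_finite_measure K by fact
  have sets_eq: "sets (return M x \<Otimes>\<^sub>M K) = sets (M \<Otimes>\<^sub>M N)"
    using K by (intro sets_pair_measure_cong) auto
  then show "sets (return M x \<Otimes>\<^sub>M K) = sets (distr K (M \<Otimes>\<^sub>M N) (Pair x))" by simp
  fix S assume "S \<in> sets (return M x \<Otimes>\<^sub>M K)"
  then have S: "S \<in> sets (M \<Otimes>\<^sub>M N)" using sets_eq by simp
  have Pair_meas: "Pair x \<in> measurable K (M \<Otimes>\<^sub>M N)"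
    using x by (simp add: measurable_cong_sets[OF K refl])
  have "emeasure (return M x \<Otimes>\<^sub>M K) S = (\<integral>\<^sup>+x'. emeasure K (Pair x' -` S) \<partial>return M x)"
    using S sets_eq by (intro emeasure_pair_measure_alt) auto
  also have "\<dots> = emeasure K (Pair x -` S)"
    using x S sets_eq by (intro nn_integral_return) (auto intro!: measurable_emeasure_Pair)
  also have "Pair x -` S = Pair x -` S \<inter> space K"
    using sets.sets_into_space[OF S] sets_eq_imp_space_eq[OF K] by (auto simp: space_pair_measure)
  finally show "emeasure (return M x \<Otimes>\<^sub>M K) S = emeasure (distr K (M \<Otimes>\<^sub>M N) (Pair x)) S"
    using Pair_meas S by (simp add: emeasure_distr)
qed

lemma integrable_return:
  fixes f :: "'a \<Rightarrow> real"
  assumes "x \<in> space M" and "f \<in> borel_measurable M"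
  shows "integrable (return M x) f"
  using assms by (intro integrableI_bounded) (simp_all add: nn_integral_return)

section \<open>Kullback-Leibler divergence and exponential tilting\<close>

lemma integral_real_eq_enn2ereal_diff:
  fixes f :: "'a \<Rightarrow> real"
  assumes "integrable M f"
  shows "enn2ereal (\<integral>\<^sup>+x. ennreal (f x) \<partial>M) - enn2ereal (\<integral>\<^sup>+x. ennreal (- f x) \<partial>M)
    = ereal (\<integral>x. f x \<partial>M)"
proof -
  have "enn2ereal A = ereal (enn2real A)" if "A \<noteq> \<infinity>" for A :: ennreal
    using that by (simp add: enn2ereal_ennreal[symmetric] ennreal_enn2real_if)
  then show ?thesis
    using integrableD(2,3)[OF assms] by (simp add: real_lebesgue_integral_def[OF assms])
qed

lemma KL_div_eq_integral:
  assumes "sets P1 = sets P0" and "absolutely_continuous P0 P1"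
    and "integrable P1 (\<lambda>x. ln (enn2real (RN_deriv P0 P1 x)))"
  shows "KL_div P1 P0 = ereal (\<integral>x. ln (enn2real (RN_deriv P0 P1 x)) \<partial>P1)"
  using assms by (simp add: KL_div_def ennreal_max_0 integral_real_eq_enn2ereal_diff)

lemma KL_div_density:
  fixes g :: "'a \<Rightarrow> real"
  assumes P1: "P1 = density P0 (\<lambda>x. ennreal (g x))" and g[measurable]: "g \<in> borel_measurable P0"
    and g_nonneg: "\<forall>x\<in>space P0. g x \<ge> 0" and "sigma_finite_measure P0"
    and ln_g: "integrable P1 (\<lambda>x. ln (g x))"
  shows "KL_div P1 P0 = ereal (\<integral>x. ln (g x) \<partial>P1)"
proof -
  have "AE x in P0. ennreal (g x) = RN_deriv P0 P1 x"
    using assms(4) P1 by (intro sigma_finite_measure.RN_deriv_unique) auto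
  then have "AE x in P0. ln (enn2real (RN_deriv P0 P1 x)) = ln (g x)"
    using AE_space by eventually_elim (metis enn2real_ennreal g_nonneg)
  then have AE_P1: "AE x in P1. ln (g x) = ln (enn2real (RN_deriv P0 P1 x))"
    unfolding P1 by (auto simp: AE_density intro: AE_mp)
  have "KL_div P1 P0 = ereal (\<integral>x. ln (enn2real (RN_deriv P0 P1 x)) \<partial>P1)"
  proof (rule KL_div_eq_integral)
    show "integrable P1 (\<lambda>x. ln (enn2real (RN_deriv P0 P1 x)))"
      using ln_g AE_P1 P1 by (intro integrable_cong_AE_imp[OF _ _ AE_P1]) auto
  qed (use P1 in \<open>auto intro: absolutely_continuousI_density\<close>)
  also have "\<dots> = ereal (\<integral>x. ln (g x) \<partial>P1)"
    using AE_P1 P1 by (intro arg_cong[where f=ereal] integral_cong_AE) auto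
  finally show ?thesis .
qed

lemma fenchel_young_rel_entropy:
  fixes p q a :: real
  assumes "p \<ge> 0" and "q \<ge> 0" and "p = 0 \<longrightarrow> q = 0"
  shows "q * a \<le> q * ln (q / p) + (p * exp a - q)"
proof (cases "q = 0")
  case False
  with assms have q: "q > 0" and p: "p > 0" by auto
  have "a - ln (q / p) = ln (p * exp a / q)"
    using q p by (simp add: ln_div ln_mult)
  also have "\<dots> \<le> p * exp a / q - 1"
    using q p by (intro ln_le_minus_one) simp
  finally have "q * (a - ln (q / p)) \<le> q * (p * exp a / q - 1)"
    using q by (intro mult_left_mono) auto
  also have "\<dots> = p * exp a - q"
    using q by (simp add: field_simps)
  finally show ?thesis by (simp add: algebra_simps)
qed (use assms in simp)

text \<open>\<open>q_sum\<close> and \<open>q_moment\<close> are the two equations that determine \<open>alpha\<close> and \<open>beta\<close>.\<close>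

context
  fixes C :: nat and p t rho q :: "nat \<Rightarrow> real" and alpha beta eps :: real
  assumes p_nonneg: "\<forall>c<C. p c \<ge> 0" and beta_pos: "beta > 0"
    and q_def: "q = (\<lambda>c. p c * exp (inverse beta * (t c - alpha) - rho c - 1))"
    and q_sum: "(\<Sum>c<C. q c) = 1"
    and q_moment: "(\<Sum>c<C. q c * (t c - alpha)) = (eps + 1) * beta"
begin

private lemma sum_mult_exponent:
  "(\<Sum>c<C. r c * (inverse beta * (t c - alpha) - rho c - 1))
    = inverse beta * (\<Sum>c<C. r c * (t c - alpha)) - (\<Sum>c<C. rho c * r c) - (\<Sum>c<C. r c)"
proof -
  have "(\<Sum>c<C. r c * (inverse beta * (t c - alpha) - rho c - 1))
      = (\<Sum>c<C. inverse beta * (r c * (t c - alpha)) - rho c * r c - r c)"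
    by (intro sum.cong refl) (simp add: algebra_simps)
  then show ?thesis by (simp add: sum_subtractf sum_distrib_left)
qed

private lemma sum_centered:
  "(\<Sum>c<C. r c) = 1 \<Longrightarrow> (\<Sum>c<C. r c * (t c - alpha)) = (\<Sum>c<C. r c * t c) - alpha"
  by (simp add: right_diff_distrib sum_subtractf sum_distrib_right[symmetric])

lemma exp_tilting_budget: "(\<Sum>c<C. q c * ln (q c / p c)) + (\<Sum>c<C. rho c * q c) = eps"
proof -
  have "(\<Sum>c<C. q c * ln (q c / p c)) = (\<Sum>c<C. q c * (inverse beta * (t c - alpha) - rho c - 1))"
    by (intro sum.cong refl) (simp add: q_def)
  moreover have "inverse beta * ((eps + 1) * beta) = eps + 1"
    using beta_pos by simp
  ultimately show ?thesis
    by (simp add: sum_mult_exponent q_sum q_moment)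
qed

lemma exp_tilting_maximal:
  assumes r_nonneg: "\<forall>c<C. r c \<ge> 0" and r_supp: "\<forall>c<C. p c = 0 \<longrightarrow> r c = 0"
    and r_sum: "(\<Sum>c<C. r c) = 1"
    and r_budget: "(\<Sum>c<C. r c * ln (r c / p c)) + (\<Sum>c<C. rho c * r c) \<le> eps"
  shows "(\<Sum>c<C. r c * t c) \<le> (\<Sum>c<C. q c * t c)"
proof -
  let ?a = "\<lambda>c. inverse beta * (t c - alpha) - rho c - 1"
  have "(\<Sum>c<C. r c * ?a c) \<le> (\<Sum>c<C. r c * ln (r c / p c) + (p c * exp (?a c) - r c))"
    using p_nonneg r_nonneg r_supp by (intro sum_mono fenchel_young_rel_entropy) auto
  also have "\<dots> = (\<Sum>c<C. r c * ln (r c / p c))"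
    using q_sum r_sum by (simp add: sum.distrib sum_subtractf q_def)
  finally have "inverse beta * (\<Sum>c<C. r c * (t c - alpha)) \<le> eps + 1"
    using r_budget r_sum by (simp add: sum_mult_exponent)
  then have "(\<Sum>c<C. r c * (t c - alpha)) \<le> (\<Sum>c<C. q c * (t c - alpha))"
    using beta_pos by (simp add: q_moment inverse_eq_divide pos_divide_le_eq)
  then show ?thesis
    using r_sum q_sum by (simp add: sum_centered)
qed

end

section \<open>Exponential families\<close>

lemma exp_taylor_remainder_le:
  fixes y s t \<delta> :: real
  assumes y: "\<bar>y\<bar> \<le> s * t" and s: "0 \<le> s" "s \<le> \<delta> / 2" and t: "0 \<le> t" and \<delta>: "\<delta> > 0"
  shows "exp y - 1 - y \<le> s\<^sup>2 * (8 / \<delta>\<^sup>2) * exp (\<delta> * t)"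
proof -
  obtain \<xi> where \<xi>: "\<bar>\<xi>\<bar> \<le> \<bar>y\<bar>" and "exp y = (\<Sum>m<2. y ^ m / fact m) + exp \<xi> / fact 2 * y ^ 2"
    using Maclaurin_exp_le[of y 2] by blast
  then have remainder: "exp y - 1 - y = exp \<xi> / 2 * y\<^sup>2"
    by (simp add: numeral_2_eq_2)
  have "\<xi> \<le> \<delta> / 2 * t"
    using \<xi> y mult_right_mono[OF s(2) t] by linarith
  then have exp_\<xi>: "exp \<xi> \<le> exp (\<delta> * t / 2)"
    by simp
  have y_sq: "y\<^sup>2 \<le> s\<^sup>2 * t\<^sup>2"
    using power_mono[OF y, of 2] by (simp add: power_mult_distrib)
  have "\<delta> * t / 4 \<le> exp (\<delta> * t / 4)"
    using exp_ge_add_one_self[of "\<delta> * t / 4"] by linarith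
  then have "(\<delta> * t / 4)\<^sup>2 \<le> (exp (\<delta> * t / 4))\<^sup>2"
    using \<delta> t by (intro power_mono) auto
  also have "(exp (\<delta> * t / 4))\<^sup>2 = exp (\<delta> * t / 2)"
    by (simp add: power2_eq_square exp_add[symmetric])
  finally have t_sq: "t\<^sup>2 \<le> 16 / \<delta>\<^sup>2 * exp (\<delta> * t / 2)"
    using \<delta> by (simp add: power_divide field_simps)
  have "exp \<xi> / 2 * y\<^sup>2 \<le> exp (\<delta> * t / 2) / 2 * (s\<^sup>2 * (16 / \<delta>\<^sup>2 * exp (\<delta> * t / 2)))"
    using exp_\<xi> y_sq t_sq
    by (intro mult_mono order_trans[OF y_sq] mult_left_mono) auto
  also have "\<dots> = s\<^sup>2 * (8 / \<delta>\<^sup>2) * (exp (\<delta> * t / 2) * exp (\<delta> * t / 2))"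
    by (simp add: field_simps)
  also have "exp (\<delta> * t / 2) * exp (\<delta> * t / 2) = exp (\<delta> * t)"
    by (simp add: exp_add[symmetric])
  finally show ?thesis
    using remainder by simp
qed

lemma has_derivative_of_quadratic_remainder:
  fixes f :: "'a::real_normed_vector \<Rightarrow> real"
  assumes L: "bounded_linear L" and r: "r > 0"
    and remainder: "\<forall>v. norm v \<le> r \<longrightarrow> \<bar>f (x + v) - f x - L v\<bar> \<le> K * (norm v)\<^sup>2"
  shows "(f has_derivative L) (at x)"
  unfolding has_derivative_at_alt
proof (intro conjI allI impI L)
  fix e :: real assume e: "e > 0"
  define K' where "K' = max K 1"
  have K': "K' > 0" "K \<le> K'" by (auto simp: K'_def)
  show "\<exists>d>0. \<forall>y. norm (y - x) < d \<longrightarrow> norm (f y - f x - L (y - x)) \<le> e * norm (y - x)"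
  proof (intro exI[of _ "min r (e / K')"] conjI allI impI)
    fix y assume y: "norm (y - x) < min r (e / K')"
    define v where "v = y - x"
    have v: "norm v \<le> r" "K' * norm v \<le> e"
      using y K' by (auto simp: v_def field_simps)
    have "\<bar>f (x + v) - f x - L v\<bar> \<le> K * (norm v)\<^sup>2"
      using remainder v(1) by blast
    also have "\<dots> \<le> K' * (norm v)\<^sup>2"
      using K' by (intro mult_right_mono) auto
    also have "\<dots> = (K' * norm v) * norm v" by (simp add: power2_eq_square)
    also have "\<dots> \<le> e * norm v"
      using v(2) by (intro mult_right_mono) auto
    finally show "norm (f y - f x - L (y - x)) \<le> e * norm (y - x)"
      by (simp add: v_def)
  qed (use r e K' in simp)
qed

locale expfam =
  fixes nu :: "'y measure" and h :: "'y \<Rightarrow> real" and T :: "'y \<Rightarrow> 'p::euclidean_space"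
  assumes h_measurable[measurable]: "h \<in> borel_measurable nu"
    and h_nonneg: "\<forall>y\<in>space nu. h y \<ge> 0"
    and T_measurable[measurable]: "T \<in> borel_measurable nu"
    and regular: "regular_expfam nu h T"
begin

abbreviation "Theta \<equiv> expfam_Theta nu h T"
abbreviation "Psi \<equiv> expfam_Psi nu h T"
abbreviation "dens \<equiv> expfam_dens nu h T"
abbreviation "law \<equiv> expfam_dist nu h T"

definition Z :: "'p \<Rightarrow> real" where
  "Z \<theta> = enn2real (expfam_norm nu h T \<theta>)"

definition mean :: "'p \<Rightarrow> 'p" where
  "mean \<theta> = (\<integral>y. T y \<partial>law \<theta>)"

lemma Psi_eq_ln_Z: "Psi \<theta> = ln (Z \<theta>)"
  by (simp add: expfam_Psi_def Z_def)

lemma integrable_unnormalised_dens: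
  assumes "\<theta> \<in> Theta"
  shows "integrable nu (\<lambda>y. h y * exp (\<theta> \<bullet> T y))"
  using assms h_nonneg
  by (intro integrableI_nonneg AE_I2) (auto simp: expfam_Theta_def expfam_norm_def)

lemma Z_eq_integral:
  assumes "\<theta> \<in> Theta"
  shows "Z \<theta> = (\<integral>y. h y * exp (\<theta> \<bullet> T y) \<partial>nu)"
  using h_nonneg unfolding Z_def expfam_norm_def
  by (subst nn_integral_eq_integral[OF integrable_unnormalised_dens[OF assms]])
     (auto intro!: AE_I2 integral_nonneg_AE)

text \<open>This is where affine independence of \<open>T\<close> enters: if \<open>h\<close> vanished almost everywhere,
  every linear functional of \<open>T\<close> would vanish almost everywhere on \<open>{h > 0}\<close>.\<close>
lemma Z_pos:
  assumes "\<theta> \<in> Theta"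
  shows "Z \<theta> > 0"
proof (rule ccontr)
  assume "\<not> Z \<theta> > 0"
  moreover have "Z \<theta> \<ge> 0"
    using h_nonneg by (simp add: Z_def)
  ultimately have "(\<integral>y. h y * exp (\<theta> \<bullet> T y) \<partial>nu) = 0"
    using Z_eq_integral[OF assms] by simp
  then have "AE y in nu. h y * exp (\<theta> \<bullet> T y) = 0"
    using h_nonneg integrable_unnormalised_dens[OF assms]
    by (subst (asm) integral_nonneg_eq_0_iff_AE) (auto intro: AE_I2)
  then have "AE y in nu. h y > 0 \<longrightarrow> (SOME b. b \<in> Basis) \<bullet> T y = 0"
    by eventually_elim simp
  then have "(SOME b::'p. b \<in> Basis) = 0"
    using regular unfolding regular_expfam_def by blast
  moreover have "(SOME b::'p. b \<in> Basis) \<in> Basis"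
    by (rule someI_ex) (use nonempty_Basis in blast)
  ultimately show False
    using nonzero_Basis by metis
qed

lemma dens_eq:
  assumes "\<theta> \<in> Theta"
  shows "dens \<theta> y = h y * exp (\<theta> \<bullet> T y) / Z \<theta>"
  using Z_pos[OF assms] by (simp add: expfam_dens_def Psi_eq_ln_Z exp_diff)

lemma dens_measurable[measurable]: "dens \<theta> \<in> borel_measurable nu"
  unfolding expfam_dens_def by measurable

lemma dens_nonneg: "y \<in> space nu \<Longrightarrow> dens \<theta> y \<ge> 0"
  using h_nonneg by (simp add: expfam_dens_def)

lemma sets_law[measurable_cong, simp]: "sets (law \<theta>) = sets nu"
  by (simp add: expfam_dist_def)

lemma space_law[simp]: "space (law \<theta>) = space nu"
  by (simp add: expfam_dist_def)

lemma integrable_law_iff: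
  fixes f :: "'y \<Rightarrow> real"
  assumes "f \<in> borel_measurable nu"
  shows "integrable (law \<theta>) f \<longleftrightarrow> integrable nu (\<lambda>y. dens \<theta> y * f y)"
  unfolding expfam_dist_def using dens_nonneg assms
  by (intro integrable_real_density) (auto intro: AE_I2)

lemma integral_law:
  fixes f :: "'y \<Rightarrow> real"
  assumes "f \<in> borel_measurable nu"
  shows "(\<integral>y. f y \<partial>law \<theta>) = (\<integral>y. dens \<theta> y * f y \<partial>nu)"
  unfolding expfam_dist_def using dens_nonneg assms
  by (intro integral_real_density) (auto intro: AE_I2)

lemma integrable_exp_inner_T:
  assumes "\<theta> \<in> Theta" and "\<theta> + a \<in> Theta"
  shows "integrable (law \<theta>) (\<lambda>y. exp (a \<bullet> T y))"
  using integrable_unnormalised_dens[OF assms(2)]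
  by (simp add: integrable_law_iff dens_eq[OF assms(1)] inner_add_left exp_add mult.assoc)

lemma integral_exp_inner_T:
  assumes "\<theta> \<in> Theta" and "\<theta> + a \<in> Theta"
  shows "(\<integral>y. exp (a \<bullet> T y) \<partial>law \<theta>) = Z (\<theta> + a) / Z \<theta>"
  using Z_eq_integral[OF assms(2)]
  by (simp add: integral_law dens_eq[OF assms(1)] inner_add_left exp_add mult.assoc)

lemma prob_space_law:
  assumes "\<theta> \<in> Theta"
  shows "prob_space (law \<theta>)"
proof
  have dens_fun: "dens \<theta> = (\<lambda>y. h y * exp (\<theta> \<bullet> T y) / Z \<theta>)"
    using dens_eq[OF assms] by auto
  have "emeasure (law \<theta>) (space nu) = (\<integral>\<^sup>+y. ennreal (dens \<theta> y) \<partial>nu)"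
    unfolding expfam_dist_def by (auto simp: emeasure_density intro!: nn_integral_cong)
  also have "\<dots> = ennreal (\<integral>y. dens \<theta> y \<partial>nu)"
  proof (intro nn_integral_eq_integral AE_I2 dens_nonneg)
    show "integrable nu (dens \<theta>)"
      unfolding dens_fun using integrable_unnormalised_dens[OF assms] by simp
  qed
  also have "(\<integral>y. dens \<theta> y \<partial>nu) = 1"
    using Z_pos[OF assms] Z_eq_integral[OF assms] by (simp add: dens_fun)
  finally show "emeasure (law \<theta>) (space (law \<theta>)) = 1" by simp
qed

lemma Theta_contains_cball:
  assumes "\<theta> \<in> Theta"
  obtains r where "r > 0" and "\<forall>v. norm v \<le> r \<longrightarrow> \<theta> + v \<in> Theta"
proof -
  have "open Theta" using regular by (simp add: regular_expfam_def)
  then obtain e where "e > 0" "ball \<theta> e \<subseteq> Theta" using assms by (meson openE)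
  then show ?thesis
    by (intro that[of "e / 2"]) (auto simp: dist_norm subset_iff)
qed

lemma integrable_exp_abs_inner_T:
  assumes "\<theta> \<in> Theta" and "\<theta> + a \<in> Theta" and "\<theta> + (- a) \<in> Theta"
  shows "integrable (law \<theta>) (\<lambda>y. exp \<bar>a \<bullet> T y\<bar>)"
proof (rule Bochner_Integration.integrable_bound)
  show "integrable (law \<theta>) (\<lambda>y. exp (a \<bullet> T y) + exp ((- a) \<bullet> T y))"
    using integrable_exp_inner_T[OF assms(1,2)] integrable_exp_inner_T[OF assms(1,3)] by simp
  have "exp \<bar>x\<bar> \<le> exp x + exp (- x)" for x :: real
    by (cases "x \<ge> 0") (auto simp: add_increasing add_increasing2)
  then show "AE y in law \<theta>. norm (exp \<bar>a \<bullet> T y\<bar>) \<le> norm (exp (a \<bullet> T y) + exp ((- a) \<bullet> T y))"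
    by (intro AE_I2) (simp add: add_nonneg_nonneg)
qed measurable

lemma integrable_exp_norm_T:
  assumes \<theta>: "\<theta> \<in> Theta"
  obtains \<delta> where "\<delta> > 0" and "integrable (law \<theta>) (\<lambda>y. exp (\<delta> * norm (T y)))"
proof -
  obtain r where r: "r > 0" "\<forall>v. norm v \<le> r \<longrightarrow> \<theta> + v \<in> Theta"
    using Theta_contains_cball[OF \<theta>] by blast
  define \<delta> where "\<delta> = r / sqrt DIM('p)"
  have \<delta>: "\<delta> > 0" using r by (simp add: \<delta>_def)
  have bound: "exp (\<delta> * norm x) \<le> (\<Sum>e\<in>Basis. exp \<bar>(r *\<^sub>R e) \<bullet> x\<bar>)" for x :: 'p
  proof -
    have "Max ((\<lambda>e. \<bar>x \<bullet> e\<bar>) ` Basis) \<in> (\<lambda>e. \<bar>x \<bullet> e\<bar>) ` Basis"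
      by (rule Max_in) auto
    then obtain e0 where e0: "e0 \<in> Basis" "infnorm x = \<bar>x \<bullet> e0\<bar>"
      unfolding infnorm_Max by blast
    have "\<delta> * norm x \<le> \<delta> * (sqrt DIM('p) * infnorm x)"
      using \<delta> norm_le_infnorm[of x] by (intro mult_left_mono) auto
    also have "\<dots> = \<bar>(r *\<^sub>R e0) \<bullet> x\<bar>"
      using r(1) e0 by (simp add: \<delta>_def abs_mult inner_commute)
    finally have "exp (\<delta> * norm x) \<le> exp \<bar>(r *\<^sub>R e0) \<bullet> x\<bar>" by simp
    also have "\<dots> \<le> (\<Sum>e\<in>Basis. exp \<bar>(r *\<^sub>R e) \<bullet> x\<bar>)"
      using e0(1) by (intro member_le_sum) auto
    finally show ?thesis .
  qed
  have "integrable (law \<theta>) (\<lambda>y. exp (\<delta> * norm (T y)))"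
  proof (rule Bochner_Integration.integrable_bound)
    have "\<theta> + v \<in> Theta" and "\<theta> + (- v) \<in> Theta" if "norm v \<le> r" for v
      using r(2) that by (metis norm_minus_cancel)+
    then show "integrable (law \<theta>) (\<lambda>y. \<Sum>e\<in>Basis. exp \<bar>(r *\<^sub>R e) \<bullet> T y\<bar>)"
      using r(1) by (intro Bochner_Integration.integrable_sum integrable_exp_abs_inner_T \<theta>) (auto simp: norm_Basis)
    show "AE y in law \<theta>. norm (exp (\<delta> * norm (T y))) \<le> norm (\<Sum>e\<in>Basis. exp \<bar>(r *\<^sub>R e) \<bullet> T y\<bar>)"
      using bound by (intro AE_I2) (simp add: sum_nonneg)
  qed measurable
  then show ?thesis using \<delta> that by blast
qed

lemma integrable_T:
  assumes \<theta>: "\<theta> \<in> Theta"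
  shows "integrable (law \<theta>) T"
proof -
  obtain \<delta> where \<delta>: "\<delta> > 0" "integrable (law \<theta>) (\<lambda>y. exp (\<delta> * norm (T y)))"
    using integrable_exp_norm_T[OF \<theta>] by blast
  show ?thesis
  proof (rule Bochner_Integration.integrable_bound)
    show "integrable (law \<theta>) (\<lambda>y. exp (\<delta> * norm (T y)) / \<delta>)"
      using \<delta>(2) by simp
    have "\<delta> * norm (T y) \<le> exp (\<delta> * norm (T y))" for y
      using exp_ge_add_one_self[of "\<delta> * norm (T y)"] by linarith
    then show "AE y in law \<theta>. norm (T y) \<le> norm (exp (\<delta> * norm (T y)) / \<delta>)"
      using \<delta>(1) by (intro AE_I2) (simp add: field_simps)
  qed measurable
qed

lemma integral_affine_T:
  assumes "\<theta> \<in> Theta"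
  shows "integrable (law \<theta>) (\<lambda>y. b - T y \<bullet> l)"
    and "(\<integral>y. b - T y \<bullet> l \<partial>law \<theta>) = b - mean \<theta> \<bullet> l"
proof -
  interpret prob_space "law \<theta>" by (rule prob_space_law[OF assms])
  have T_l: "integrable (law \<theta>) (\<lambda>y. T y \<bullet> l)"
    using integrable_T[OF assms] by auto
  then show "integrable (law \<theta>) (\<lambda>y. b - T y \<bullet> l)" by auto
  show "(\<integral>y. b - T y \<bullet> l \<partial>law \<theta>) = b - mean \<theta> \<bullet> l"
    using T_l integrable_T[OF assms] prob_space by (simp add: mean_def)
qed

lemma Z_quadratic_remainder:
  assumes \<theta>: "\<theta> \<in> Theta"
  obtains r K where "r > 0"
    and "\<forall>v. norm v \<le> r \<longrightarrow> \<bar>Z (\<theta> + v) - Z \<theta> - Z \<theta> * (v \<bullet> mean \<theta>)\<bar> \<le> K * (norm v)\<^sup>2"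
proof -
  interpret prob_space "law \<theta>" by (rule prob_space_law[OF \<theta>])
  obtain \<delta> where \<delta>: "\<delta> > 0" "integrable (law \<theta>) (\<lambda>y. exp (\<delta> * norm (T y)))"
    using integrable_exp_norm_T[OF \<theta>] by blast
  obtain r0 where r0: "r0 > 0" "\<forall>v. norm v \<le> r0 \<longrightarrow> \<theta> + v \<in> Theta"
    using Theta_contains_cball[OF \<theta>] by blast
  define B where "B = (\<integral>y. exp (\<delta> * norm (T y)) \<partial>law \<theta>)"
  define r where "r = min r0 (\<delta> / 2)"
  have "\<bar>Z (\<theta> + v) - Z \<theta> - Z \<theta> * (v \<bullet> mean \<theta>)\<bar> \<le> Z \<theta> * (8 / \<delta>\<^sup>2 * B) * (norm v)\<^sup>2"
    if v: "norm v \<le> r" for v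
  proof -
    have \<theta>v: "\<theta> + v \<in> Theta" using r0 v by (simp add: r_def)
    have int_exp: "integrable (law \<theta>) (\<lambda>y. exp (v \<bullet> T y))"
      by (rule integrable_exp_inner_T[OF \<theta> \<theta>v])
    have int_lin: "integrable (law \<theta>) (\<lambda>y. v \<bullet> T y)"
      using integrable_T[OF \<theta>] by auto
    define R where "R = (\<integral>y. exp (v \<bullet> T y) - 1 - v \<bullet> T y \<partial>law \<theta>)"
    have "R = Z (\<theta> + v) / Z \<theta> - 1 - v \<bullet> mean \<theta>"
      using int_exp int_lin integrable_T[OF \<theta>] prob_space
      by (simp add: R_def mean_def integral_exp_inner_T[OF \<theta> \<theta>v])
    then have Z_R: "Z (\<theta> + v) - Z \<theta> - Z \<theta> * (v \<bullet> mean \<theta>) = Z \<theta> * R"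
      using Z_pos[OF \<theta>] by (simp add: field_simps)
    have "0 \<le> R"
      unfolding R_def using exp_ge_add_one_self by (intro integral_nonneg_AE AE_I2) (smt (verit))
    moreover have "R \<le> (\<integral>y. (norm v)\<^sup>2 * (8 / \<delta>\<^sup>2) * exp (\<delta> * norm (T y)) \<partial>law \<theta>)"
      unfolding R_def
    proof (rule integral_mono)
      fix y
      show "exp (v \<bullet> T y) - 1 - v \<bullet> T y \<le> (norm v)\<^sup>2 * (8 / \<delta>\<^sup>2) * exp (\<delta> * norm (T y))"
        using v \<delta>(1) by (intro exp_taylor_remainder_le Cauchy_Schwarz_ineq2) (auto simp: r_def)
    qed (use int_exp int_lin \<delta>(2) in auto)
    ultimately have "\<bar>R\<bar> \<le> 8 / \<delta>\<^sup>2 * B * (norm v)\<^sup>2"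
      by (simp add: B_def algebra_simps)
    then have "Z \<theta> * \<bar>R\<bar> \<le> Z \<theta> * (8 / \<delta>\<^sup>2 * B * (norm v)\<^sup>2)"
      using Z_pos[OF \<theta>] by (intro mult_left_mono) auto
    then show ?thesis
      using Z_pos[OF \<theta>] by (simp add: Z_R abs_mult mult.assoc)
  qed
  then show ?thesis
    using r0(1) \<delta>(1) by (intro that[of r "Z \<theta> * (8 / \<delta>\<^sup>2 * B)"]) (auto simp: r_def)
qed

lemma has_derivative_Z:
  assumes "\<theta> \<in> Theta"
  shows "(Z has_derivative (\<lambda>v. Z \<theta> * (v \<bullet> mean \<theta>))) (at \<theta>)"
proof -
  obtain r K where "r > 0"
    and "\<forall>v. norm v \<le> r \<longrightarrow> \<bar>Z (\<theta> + v) - Z \<theta> - Z \<theta> * (v \<bullet> mean \<theta>)\<bar> \<le> K * (norm v)\<^sup>2"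
    using Z_quadratic_remainder[OF assms] by blast
  then show ?thesis
    by (intro has_derivative_of_quadratic_remainder bounded_linear_mult_right[THEN bounded_linear_compose]
              bounded_linear_inner_left)
qed

lemma has_derivative_Psi:
  assumes "\<theta> \<in> Theta"
  shows "(Psi has_derivative (\<lambda>v. v \<bullet> mean \<theta>)) (at \<theta>)"
proof -
  have "((\<lambda>\<theta>. ln (Z \<theta>)) has_derivative (\<lambda>v. Z \<theta> * (v \<bullet> mean \<theta>) * inverse (Z \<theta>))) (at \<theta>)"
    by (rule has_derivative_ln[OF Z_pos[OF assms] has_derivative_Z[OF assms]])
  moreover have "(\<lambda>v. Z \<theta> * (v \<bullet> mean \<theta>) * inverse (Z \<theta>)) = (\<lambda>v. v \<bullet> mean \<theta>)"
    using Z_pos[OF assms] by (simp add: fun_eq_iff)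
  ultimately show ?thesis
    by (simp add: Psi_eq_ln_Z[abs_def])
qed

lemma gradPsi_eq_mean:
  assumes "\<theta> \<in> Theta"
  shows "expfam_gradPsi nu h T \<theta> = mean \<theta>"
  unfolding expfam_gradPsi_def
proof (rule some_equality)
  show "GDERIV Psi \<theta> :> mean \<theta>"
    unfolding gderiv_def by (rule has_derivative_Psi[OF assms])
  fix g assume "GDERIV Psi \<theta> :> g"
  then have "(\<lambda>v. v \<bullet> g) = (\<lambda>v. v \<bullet> mean \<theta>)"
    unfolding gderiv_def using has_derivative_Psi[OF assms] by (rule has_derivative_unique)
  then show "g = mean \<theta>"
    by (metis euclidean_eqI inner_commute)
qed

lemma continuous_on_Psi: "continuous_on Theta Psi"
  by (intro continuous_at_imp_continuous_on ballI has_derivative_continuous[OF has_derivative_Psi])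

lemma law_eq_density_law:
  "law \<theta>1 = density (law \<theta>0) (\<lambda>y. ennreal (exp ((\<theta>1 - \<theta>0) \<bullet> T y - Psi \<theta>1 + Psi \<theta>0)))"
proof -
  have "density (law \<theta>0) (\<lambda>y. ennreal (exp ((\<theta>1 - \<theta>0) \<bullet> T y - Psi \<theta>1 + Psi \<theta>0)))
      = density nu (\<lambda>y. ennreal (dens \<theta>0 y) * ennreal (exp ((\<theta>1 - \<theta>0) \<bullet> T y - Psi \<theta>1 + Psi \<theta>0)))"
    unfolding expfam_dist_def by (rule density_density_eq) measurable
  also have "\<dots> = law \<theta>1"
    unfolding expfam_dist_def
  proof (intro density_cong AE_I2)
    fix y assume "y \<in> space nu"
    then show "ennreal (dens \<theta>0 y) * ennreal (exp ((\<theta>1 - \<theta>0) \<bullet> T y - Psi \<theta>1 + Psi \<theta>0))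
        = ennreal (dens \<theta>1 y)"
      using dens_nonneg
      by (simp add: ennreal_mult[symmetric] expfam_dens_def mult.assoc exp_add[symmetric]
                    inner_diff_left)
  qed measurable
  finally show ?thesis ..
qed

lemma KL_div_law:
  assumes "\<theta>1 \<in> Theta" and "\<theta>0 \<in> Theta"
  shows "KL_div (law \<theta>1) (law \<theta>0) = ereal ((\<theta>1 - \<theta>0) \<bullet> mean \<theta>1 - Psi \<theta>1 + Psi \<theta>0)"
proof -
  have ln_density: "(\<lambda>y. ln (exp ((\<theta>1 - \<theta>0) \<bullet> T y - Psi \<theta>1 + Psi \<theta>0)))
      = (\<lambda>y. (Psi \<theta>0 - Psi \<theta>1) - T y \<bullet> (\<theta>0 - \<theta>1))"
    by (auto simp: inner_diff_left inner_diff_right inner_commute)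
  have "integrable (law \<theta>1) (\<lambda>y. ln (exp ((\<theta>1 - \<theta>0) \<bullet> T y - Psi \<theta>1 + Psi \<theta>0)))"
    unfolding ln_density by (rule integral_affine_T(1)[OF assms(1)])
  then have "KL_div (law \<theta>1) (law \<theta>0)
      = ereal (\<integral>y. ln (exp ((\<theta>1 - \<theta>0) \<bullet> T y - Psi \<theta>1 + Psi \<theta>0)) \<partial>law \<theta>1)"
    using prob_space_law[OF assms(2)]
    by (intro KL_div_density[OF law_eq_density_law]) (auto simp: prob_space_imp_sigma_finite)
  then show ?thesis
    unfolding ln_density integral_affine_T(2)[OF assms(1)]
    by (simp add: inner_diff_left inner_diff_right inner_commute)
qed

lemma Psi_ge_tangent:
  assumes \<theta>: "\<theta> \<in> Theta" and \<theta>': "\<theta>' \<in> Theta"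
  shows "Psi \<theta> + (\<theta>' - \<theta>) \<bullet> mean \<theta> \<le> Psi \<theta>'"
proof -
  interpret prob_space "law \<theta>" by (rule prob_space_law[OF \<theta>])
  define a where "a = \<theta>' - \<theta>"
  define c where "c = a \<bullet> mean \<theta>"
  have \<theta>a: "\<theta> + a \<in> Theta" using \<theta>' by (simp add: a_def)
  have affine: "(\<lambda>y. 1 + (a \<bullet> T y - c)) = (\<lambda>y. (1 - c) - T y \<bullet> (- a))"
    by (auto simp: inner_commute)
  have "1 = (\<integral>y. 1 + (a \<bullet> T y - c) \<partial>law \<theta>)"
    unfolding affine integral_affine_T(2)[OF \<theta>] by (simp add: c_def inner_commute)
  also have "\<dots> \<le> (\<integral>y. exp (a \<bullet> T y - c) \<partial>law \<theta>)"
  proof (rule integral_mono)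
    show "integrable (law \<theta>) (\<lambda>y. 1 + (a \<bullet> T y - c))"
      unfolding affine by (rule integral_affine_T(1)[OF \<theta>])
    show "integrable (law \<theta>) (\<lambda>y. exp (a \<bullet> T y - c))"
      using integrable_exp_inner_T[OF \<theta> \<theta>a] by (simp add: exp_diff)
  qed (rule exp_ge_add_one_self)
  also have "\<dots> = exp (- c) * (Z \<theta>' / Z \<theta>)"
    using integral_exp_inner_T[OF \<theta> \<theta>a] by (simp add: exp_diff exp_minus a_def field_simps)
  finally have "exp c \<le> Z \<theta>' / Z \<theta>"
    using Z_pos[OF \<theta>] by (simp add: exp_minus field_simps)
  then have "c \<le> ln (Z \<theta>' / Z \<theta>)"
    using Z_pos[OF \<theta>] Z_pos[OF \<theta>'] by (subst ln_ge_iff) auto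
  then show ?thesis
    using Z_pos[OF \<theta>] Z_pos[OF \<theta>'] by (simp add: Psi_eq_ln_Z ln_div c_def a_def)
qed

lemma KL_div_law_tilted:
  assumes "\<theta>h \<in> Theta" and "\<theta>s = \<theta>h - inverse \<gamma> *\<^sub>R l" and "\<theta>s \<in> Theta"
    and "Psi \<theta>s + inverse \<gamma> * (mean \<theta>s \<bullet> l) = Psi \<theta>h - \<rho>"
  shows "KL_div (law \<theta>s) (law \<theta>h) = ereal \<rho>"
  using assms by (simp add: KL_div_law inner_commute)

lemma mean_inner_le_of_KL_le:
  assumes \<theta>: "\<theta> \<in> Theta" and \<theta>h: "\<theta>h \<in> Theta" and \<gamma>: "\<gamma> > 0"
    and \<theta>s_def: "\<theta>s = \<theta>h - inverse \<gamma> *\<^sub>R l" and \<theta>s: "\<theta>s \<in> Theta"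
    and \<gamma>_eq: "Psi \<theta>s + inverse \<gamma> * (mean \<theta>s \<bullet> l) = Psi \<theta>h - \<rho>"
    and KL: "KL_div (law \<theta>) (law \<theta>h) \<le> ereal \<rho>"
  shows "mean \<theta>s \<bullet> l \<le> mean \<theta> \<bullet> l"
proof -
  have "(\<theta> - \<theta>h) \<bullet> mean \<theta> - Psi \<theta> + Psi \<theta>h \<le> \<rho>"
    using KL by (simp add: KL_div_law[OF \<theta> \<theta>h])
  moreover have "Psi \<theta> + (\<theta>s - \<theta>) \<bullet> mean \<theta> \<le> Psi \<theta>s"
    by (rule Psi_ge_tangent[OF \<theta> \<theta>s])
  ultimately have "inverse \<gamma> * (mean \<theta>s \<bullet> l) \<le> inverse \<gamma> * (mean \<theta> \<bullet> l)"
    using \<gamma>_eq by (simp add: \<theta>s_def inner_diff_left inner_commute[of l])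
  then show ?thesis
    using \<gamma> by simp
qed

end

section \<open>Distributions on finitely many atoms\<close>

lemma nominal_X_eq_finite_mixture:
  "nominal_X MX C xhat q = finite_mixture MX C q (\<lambda>c. return MX (xhat c))"
  unfolding nominal_X_def finite_mixture_def
  by (rule measure_of_eq[OF sets.space_closed]) (simp add: sets.sigma_sets_eq)

lemma sets_nominal_X [simp, measurable_cong]: "sets (nominal_X MX C xhat q) = sets MX"
  by (simp add: nominal_X_eq_finite_mixture)

lemma mixture_dist_eq_finite_mixture:
  "mixture_dist MX nu C xhat q K = finite_mixture (MX \<Otimes>\<^sub>M nu) C q (\<lambda>c. return MX (xhat c) \<Otimes>\<^sub>M K c)"
  by (simp add: mixture_dist_def finite_mixture_def)

lemma sets_mixture_dist [simp, measurable_cong]: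
  "sets (mixture_dist MX nu C xhat q K) = sets (MX \<Otimes>\<^sub>M nu)"
  by (simp add: mixture_dist_eq_finite_mixture)

locale finite_atoms =
  fixes MX :: "'x measure" and C :: nat and xhat :: "nat \<Rightarrow> 'x"
  assumes C_pos: "C > 0" and xhat_inj: "inj_on xhat {..<C}"
    and xhat_space: "\<forall>c<C. xhat c \<in> space MX" and xhat_sets: "\<forall>c<C. {xhat c} \<in> sets MX"
begin

lemma sum_indicator_atom:
  assumes "c < C"
  shows "(\<Sum>d<C. f d * indicator {xhat c} (xhat d)) = (f c :: 'a::semiring_1)"
proof -
  have "(\<Sum>d<C. f d * indicator {xhat c} (xhat d)) = (\<Sum>d<C. if d = c then f d else 0)"
    using xhat_inj assms by (intro sum.cong refl) (auto simp: inj_on_def indicator_def)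
  then show ?thesis
    using assms by simp
qed

lemma atoms_sets: "xhat ` {..<C} \<in> sets MX"
proof -
  have "xhat ` {..<C} = (\<Union>c<C. {xhat c})" by auto
  then show ?thesis
    using xhat_sets by (auto intro: sets.finite_UN)
qed

lemma emeasure_nominal_X:
  assumes "\<forall>c<C. q c \<ge> 0" and "A \<in> sets MX"
  shows "emeasure (nominal_X MX C xhat q) A = (\<Sum>c<C. ennreal (q c) * indicator A (xhat c))"
  using assms C_pos xhat_space
  by (simp add: nominal_X_eq_finite_mixture emeasure_finite_mixture space_subprob_algebra
                prob_space_imp_subprob_space prob_space_return)

lemma emeasure_nominal_X_atom:
  assumes "\<forall>c<C. q c \<ge> 0" and "c < C"
  shows "emeasure (nominal_X MX C xhat q) {xhat c} = ennreal (q c)"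
proof -
  have "emeasure (nominal_X MX C xhat q) {xhat c} = (\<Sum>d<C. ennreal (q d) * indicator {xhat c} (xhat d))"
    using assms xhat_sets by (intro emeasure_nominal_X) auto
  also have "\<dots> = ennreal (q c)"
    by (rule sum_indicator_atom[OF assms(2)])
  finally show ?thesis .
qed

lemma measure_nominal_X_atom:
  assumes "\<forall>c<C. q c \<ge> 0" and "c < C"
  shows "measure (nominal_X MX C xhat q) {xhat c} = q c"
  using assms by (simp add: measure_def emeasure_nominal_X_atom)

lemma prob_space_nominal_X:
  assumes "\<forall>c<C. q c \<ge> 0" and "(\<Sum>c<C. q c) = 1"
  shows "prob_space (nominal_X MX C xhat q)"
  using assms C_pos xhat_space
  by (simp add: nominal_X_eq_finite_mixture prob_space_finite_mixture space_subprob_algebra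
                prob_space_imp_subprob_space prob_space_return)

lemma emeasure_eq_sum_atoms:
  assumes sets_M: "sets M = sets MX" and null: "emeasure M (space MX - xhat ` {..<C}) = 0"
    and A: "A \<in> sets MX"
  shows "emeasure M A = (\<Sum>c<C. emeasure M {xhat c} * indicator A (xhat c))"
proof -
  have "emeasure M A = emeasure M (A - (space MX - xhat ` {..<C}))"
    using null A atoms_sets sets_M by (intro emeasure_Diff_null_set[symmetric]) auto
  also have "A - (space MX - xhat ` {..<C}) = xhat ` {c\<in>{..<C}. xhat c \<in> A}"
    using sets.sets_into_space[OF A] by auto
  also have "emeasure M \<dots> = (\<Sum>x\<in>xhat ` {c\<in>{..<C}. xhat c \<in> A}. emeasure M {x})"
    using xhat_sets sets_M by (intro emeasure_eq_sum_singleton) auto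
  also have "\<dots> = (\<Sum>c\<in>{c\<in>{..<C}. xhat c \<in> A}. emeasure M {xhat c})"
    using inj_on_subset[OF xhat_inj] by (subst sum.reindex) (auto simp: subset_eq)
  also have "\<dots> = (\<Sum>c<C. emeasure M {xhat c} * indicator A (xhat c))"
    by (simp add: sum.inter_filter indicator_def Int_def conj_commute)
  finally show ?thesis .
qed

lemma nominal_X_of_absolutely_continuous:
  assumes p: "\<forall>c<C. p c \<ge> 0" and QX: "prob_space QX" and sets_QX: "sets QX = sets MX"
    and ac: "absolutely_continuous (nominal_X MX C xhat p) QX"
  shows "QX = nominal_X MX C xhat (\<lambda>c. measure QX {xhat c})"
    and "\<forall>c<C. p c = 0 \<longrightarrow> measure QX {xhat c} = 0"
    and "(\<Sum>c<C. measure QX {xhat c}) = 1"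
proof -
  interpret QX: prob_space QX by fact
  have null: "emeasure QX A = 0" if "A \<in> sets MX" "emeasure (nominal_X MX C xhat p) A = 0" for A
    using ac that sets_QX by (auto simp: absolutely_continuous_def null_sets_def)
  have "emeasure QX (space MX - xhat ` {..<C}) = 0"
    using atoms_sets p by (intro null) (auto simp: emeasure_nominal_X)
  then have QX_atoms: "emeasure QX A = (\<Sum>c<C. ennreal (measure QX {xhat c}) * indicator A (xhat c))"
    if "A \<in> sets MX" for A
    using emeasure_eq_sum_atoms[OF sets_QX _ that] by (simp add: QX.emeasure_eq_measure)
  show QX_eq: "QX = nominal_X MX C xhat (\<lambda>c. measure QX {xhat c})"
    using sets_QX by (intro measure_eqI) (simp_all add: QX_atoms emeasure_nominal_X)
  show "\<forall>c<C. p c = 0 \<longrightarrow> measure QX {xhat c} = 0"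
    using null xhat_sets emeasure_nominal_X_atom[OF p] by (simp add: measure_def)
  have "ennreal (\<Sum>c<C. measure QX {xhat c}) = emeasure QX (space MX)"
    using xhat_space by (simp add: QX_atoms sum_ennreal)
  then show "(\<Sum>c<C. measure QX {xhat c}) = 1"
    using QX.emeasure_space_1 sets_eq_imp_space_eq[OF sets_QX] by simp
qed

lemma KL_div_nominal_X:
  assumes p: "\<forall>c<C. p c \<ge> 0" and p_sum: "(\<Sum>c<C. p c) = 1"
    and q: "\<forall>c<C. q c \<ge> 0" and q_supp: "\<forall>c<C. p c = 0 \<longrightarrow> q c = 0"
  shows "KL_div (nominal_X MX C xhat q) (nominal_X MX C xhat p) = ereal (\<Sum>c<C. q c * ln (q c / p c))"
proof -
  define g where "g x = (\<Sum>c<C. (q c / p c) * indicator {xhat c} x)" for x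
  have g_meas[measurable]: "g \<in> borel_measurable MX"
    unfolding g_def using xhat_sets
    by (intro borel_measurable_sum borel_measurable_times borel_measurable_const borel_measurable_indicator) auto
  have g_atom: "g (xhat c) = q c / p c" if "c < C" for c
    using sum_indicator_atom[OF that, of "\<lambda>d. q d / p d"] by (simp add: g_def indicator_def eq_commute)
  have p_g: "ennreal (p c) * ennreal (g (xhat c)) = ennreal (q c)" if "c < C" for c
    using that p q q_supp by (cases "p c = 0") (simp_all add: g_atom ennreal_mult[symmetric])
  have return_subprob: "\<forall>c<C. return MX (xhat c) \<in> space (subprob_algebra MX)"
    using xhat_space by (simp add: space_subprob_algebra prob_space_imp_subprob_space prob_space_return)
  have density: "nominal_X MX C xhat q = density (nominal_X MX C xhat p) g"
  proof (rule measure_eqI)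
    fix A assume "A \<in> sets (nominal_X MX C xhat q)"
    then have A[measurable]: "A \<in> sets MX" by simp
    have "emeasure (density (nominal_X MX C xhat p) g) A
        = (\<integral>\<^sup>+x. ennreal (g x) * indicator A x \<partial>nominal_X MX C xhat p)"
      by (simp add: emeasure_density)
    also have "\<dots> = (\<Sum>c<C. ennreal (p c) * (ennreal (g (xhat c)) * indicator A (xhat c)))"
      using C_pos p return_subprob xhat_space
      by (simp add: nominal_X_eq_finite_mixture nn_integral_finite_mixture nn_integral_return)
    also have "\<dots> = (\<Sum>c<C. ennreal (q c) * indicator A (xhat c))"
      using p_g by (simp add: mult.assoc[symmetric])
    finally show "emeasure (nominal_X MX C xhat q) A = emeasure (density (nominal_X MX C xhat p) g) A"
      using q by (simp add: emeasure_nominal_X)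
  qed simp
  have int: "integrable (nominal_X MX C xhat q) (\<lambda>x. ln (g x))"
    and int_ln: "(\<integral>x. ln (g x) \<partial>nominal_X MX C xhat q) = (\<Sum>c<C. q c * ln (g (xhat c)))"
    using C_pos q return_subprob xhat_space
    by (simp_all add: nominal_X_eq_finite_mixture integral_finite_mixture integrable_return
                      integral_return)
  have "KL_div (nominal_X MX C xhat q) (nominal_X MX C xhat p) = ereal (\<integral>x. ln (g x) \<partial>nominal_X MX C xhat q)"
  proof (rule KL_div_density[OF density _ _ _ int])
    show "\<forall>x\<in>space (nominal_X MX C xhat p). 0 \<le> g x"
      using p q by (auto simp: g_def intro!: sum_nonneg)
    show "sigma_finite_measure (nominal_X MX C xhat p)"
      using p p_sum by (intro prob_space_imp_sigma_finite prob_space_nominal_X)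
  qed measurable
  then show ?thesis
    by (simp add: int_ln g_atom)
qed

context
  fixes nu :: "'y measure" and K :: "nat \<Rightarrow> 'y measure" and q :: "nat \<Rightarrow> real"
  assumes K: "\<forall>c<C. prob_space (K c) \<and> sets (K c) = sets nu"
    and q_nonneg: "\<forall>c<C. q c \<ge> 0"
begin

private lemma return_pair_subprob:
  "\<forall>c<C. return MX (xhat c) \<Otimes>\<^sub>M K c \<in> space (subprob_algebra (MX \<Otimes>\<^sub>M nu))"
  using K xhat_space
  by (auto simp: space_subprob_algebra intro!: prob_space_imp_subprob_space prob_space_pair
                 prob_space_return sets_pair_measure_cong)

private lemma return_pair_eq_distr:
  "c < C \<Longrightarrow> return MX (xhat c) \<Otimes>\<^sub>M K c = distr (K c) (MX \<Otimes>\<^sub>M nu) (Pair (xhat c))"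
  using K xhat_space by (intro return_pair_measure_eq_distr prob_space_imp_sigma_finite) auto

lemma emeasure_mixture_dist_atom:
  assumes c: "c < C" and A: "A \<in> sets nu"
  shows "emeasure (mixture_dist MX nu C xhat q K) ({xhat c} \<times> A) = ennreal (q c) * emeasure (K c) A"
proof -
  have "emeasure (return MX (xhat d) \<Otimes>\<^sub>M K d) ({xhat c} \<times> A) = indicator {xhat c} (xhat d) * emeasure (K d) A"
    if "d < C" for d
    using that c A K xhat_sets
    by (simp add: sigma_finite_measure.emeasure_pair_measure_Times prob_space_imp_sigma_finite)
  then have "emeasure (mixture_dist MX nu C xhat q K) ({xhat c} \<times> A)
      = (\<Sum>d<C. (ennreal (q d) * emeasure (K d) A) * indicator {xhat c} (xhat d))"
    using c A xhat_sets C_pos q_nonneg return_pair_subprob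
    by (simp add: mixture_dist_eq_finite_mixture emeasure_finite_mixture ac_simps)
  also have "\<dots> = ennreal (q c) * emeasure (K c) A"
    by (rule sum_indicator_atom[OF c])
  finally show ?thesis .
qed

lemma prob_space_mixture_dist:
  "(\<Sum>c<C. q c) = 1 \<Longrightarrow> prob_space (mixture_dist MX nu C xhat q K)"
  using C_pos q_nonneg return_pair_subprob K xhat_space
  by (simp add: mixture_dist_eq_finite_mixture prob_space_finite_mixture prob_space_pair
                prob_space_return)

lemma integral_mixture_dist:
  fixes F :: "'x \<times> 'y \<Rightarrow> real"
  assumes F[measurable]: "F \<in> borel_measurable (MX \<Otimes>\<^sub>M nu)"
    and F_int: "\<forall>c<C. integrable (K c) (\<lambda>y. F (xhat c, y))"
  shows "integrable (mixture_dist MX nu C xhat q K) F"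
    and "(\<integral>z. F z \<partial>mixture_dist MX nu C xhat q K) = (\<Sum>c<C. q c * (\<integral>y. F (xhat c, y) \<partial>K c))"
proof -
  have Pair_meas: "Pair (xhat c) \<in> measurable (K c) (MX \<Otimes>\<^sub>M nu)" if "c < C" for c
    using that K xhat_space by (simp add: measurable_cong_sets[of "K c" nu])
  have "\<forall>c<C. integrable (return MX (xhat c) \<Otimes>\<^sub>M K c) F"
    using F_int by (simp add: return_pair_eq_distr integrable_distr_eq[OF Pair_meas F])
  then show "integrable (mixture_dist MX nu C xhat q K) F"
    and "(\<integral>z. F z \<partial>mixture_dist MX nu C xhat q K) = (\<Sum>c<C. q c * (\<integral>y. F (xhat c, y) \<partial>K c))"
    using C_pos q_nonneg return_pair_subprob
    by (simp_all add: mixture_dist_eq_finite_mixture integral_finite_mixture return_pair_eq_distr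
                      integral_distr[OF Pair_meas F])
qed

private lemma emeasure_return_pair:
  assumes "c < C" and S: "S \<in> sets (MX \<Otimes>\<^sub>M nu)"
  shows "emeasure (return MX (xhat c) \<Otimes>\<^sub>M K c) S = emeasure (K c) (Pair (xhat c) -` S)"
proof -
  have "Pair (xhat c) -` S \<subseteq> space (K c)"
    using assms K sets.sets_into_space[OF S] sets_eq_imp_space_eq[of "K c" nu]
    by (auto simp: space_pair_measure)
  then show ?thesis
    using assms K xhat_space
    by (simp add: return_pair_eq_distr emeasure_distr measurable_cong_sets[of "K c" nu] Int_absorb2)
qed

lemma mixture_dist_unique:
  assumes Q: "prob_space Q" and sets_Q: "sets Q = sets (MX \<Otimes>\<^sub>M nu)" and q_sum: "(\<Sum>c<C. q c) = 1"
    and Q_atom: "\<forall>c<C. \<forall>A\<in>sets nu. emeasure Q ({xhat c} \<times> A) = ennreal (q c) * emeasure (K c) A"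
  shows "Q = mixture_dist MX nu C xhat q K"
proof (rule measure_eqI)
  interpret Q: prob_space Q by fact
  define R where "R c = {xhat c} \<times> space nu" for c
  have R_sets: "R ` {..<C} \<subseteq> sets Q"
    using xhat_sets sets_Q by (auto simp: R_def)
  have R_disj: "disjoint_family_on R {..<C}"
    using xhat_inj by (auto simp: disjoint_family_on_def R_def inj_on_def)
  have K_space: "emeasure (K c) (space nu) = 1" if "c < C" for c
    using that K prob_space.emeasure_space_1[of "K c"] sets_eq_imp_space_eq[of "K c" nu] by auto
  have "emeasure Q (\<Union>c<C. R c) = (\<Sum>c<C. emeasure Q (R c))"
    using R_sets R_disj by (intro sum_emeasure[symmetric]) auto
  also have "\<dots> = (\<Sum>c<C. ennreal (q c))"
    using Q_atom K_space by (intro sum.cong refl) (simp add: R_def)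
  also have "\<dots> = 1"
    using q_nonneg q_sum by (subst sum_ennreal) auto
  finally have "space Q - (\<Union>c<C. R c) \<in> null_sets Q"
    using R_sets Q.emeasure_space_1 by (auto simp: emeasure_compl)
  fix S assume S_Q: "S \<in> sets Q"
  then have S: "S \<in> sets (MX \<Otimes>\<^sub>M nu)" using sets_Q by simp
  have slice: "S \<inter> R c = {xhat c} \<times> Pair (xhat c) -` S" for c
    using sets.sets_into_space[OF S] by (auto simp: R_def space_pair_measure)
  have "emeasure Q S = emeasure Q (S - (space Q - (\<Union>c<C. R c)))"
    by (rule emeasure_Diff_null_set[symmetric]) fact+
  also have "S - (space Q - (\<Union>c<C. R c)) = (\<Union>c<C. S \<inter> R c)"
    using sets.sets_into_space[OF S_Q] by auto
  also have "emeasure Q \<dots> = (\<Sum>c<C. emeasure Q (S \<inter> R c))"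
    using R_sets R_disj S_Q by (intro sum_emeasure[symmetric]) (auto simp: disjoint_family_on_def)
  also have "\<dots> = (\<Sum>c<C. ennreal (q c) * emeasure (return MX (xhat c) \<Otimes>\<^sub>M K c) S)"
    using Q_atom S by (simp add: slice emeasure_return_pair sets_Pair1)
  also have "\<dots> = emeasure (mixture_dist MX nu C xhat q K) S"
    using S C_pos q_nonneg return_pair_subprob
    by (simp add: mixture_dist_eq_finite_mixture emeasure_finite_mixture)
  finally show "emeasure Q S = emeasure (mixture_dist MX nu C xhat q K) S" .
qed (simp add: sets_Q)

end

end

section \<open>The worst-case distribution\<close>

lemma (in expfam) ell_loss_measurable:
  fixes lam :: "'w::topological_space \<Rightarrow> 'x::topological_space \<Rightarrow> 'p"
  assumes lam_cont: "continuous_on (Wcal \<times> Xcal) (\<lambda>(w, x). lam w x)"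
    and lam_Theta: "\<forall>w'\<in>Wcal. \<forall>x\<in>Xcal. lam w' x \<in> Theta" and w: "w \<in> Wcal"
  shows "(\<lambda>(x, y). ell_loss nu h T lam x y w) \<in> borel_measurable (restrict_space borel Xcal \<Otimes>\<^sub>M nu)"
proof -
  have "continuous_on Xcal (\<lambda>x. (\<lambda>(w, x). lam w x) (w, x))"
    using w by (intro continuous_on_compose2[OF lam_cont]) (auto intro!: continuous_intros)
  then have lam_w: "continuous_on Xcal (lam w)"
    by simp
  have Psi_lam_w: "continuous_on Xcal (\<lambda>x. Psi (lam w x))"
    using lam_Theta w by (intro continuous_on_compose2[OF continuous_on_Psi lam_w]) auto
  note [measurable] = borel_measurable_continuous_on_restrict[OF lam_w]
    borel_measurable_continuous_on_restrict[OF Psi_lam_w]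
  show ?thesis
    unfolding ell_loss_def by measurable
qed

locale expfam_atoms = expfam nu h T + finite_atoms MX C xhat
  for nu :: "'y measure" and h and T :: "'y \<Rightarrow> 'p::euclidean_space"
    and MX :: "'x measure" and C and xhat
begin

lemma integral_mixture_dist_affine:
  fixes F :: "'x \<times> 'y \<Rightarrow> real"
  assumes q: "\<forall>c<C. q c \<ge> 0" and \<theta>: "\<forall>c<C. \<theta> c \<in> Theta"
    and F: "F \<in> borel_measurable (MX \<Otimes>\<^sub>M nu)"
    and F_atom: "\<forall>c<C. \<forall>y. F (xhat c, y) = b c - T y \<bullet> l c"
  shows "integrable (mixture_dist MX nu C xhat q (\<lambda>c. law (\<theta> c))) F"
    and "(\<integral>z. F z \<partial>mixture_dist MX nu C xhat q (\<lambda>c. law (\<theta> c))) = (\<Sum>c<C. q c * (b c - mean (\<theta> c) \<bullet> l c))"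
  using \<theta> prob_space_law q F F_atom integral_affine_T[of "\<theta> _"]
  by (simp_all add: integral_mixture_dist)

lemma ambiguity_set_eq:
  assumes p: "\<forall>c<C. p c \<ge> 0" and p_sum: "(\<Sum>c<C. p c) = 1"
  shows "ambiguity_set nu h T MX C xhat p thetahat rho eps =
    {mixture_dist MX nu C xhat q (\<lambda>c. law (\<theta> c)) | q \<theta>.
      (\<forall>c<C. q c \<ge> 0 \<and> (p c = 0 \<longrightarrow> q c = 0) \<and> \<theta> c \<in> Theta
         \<and> KL_div (law (\<theta> c)) (law (thetahat c)) \<le> ereal (rho c))
      \<and> (\<Sum>c<C. q c) = 1 \<and> (\<Sum>c<C. q c * ln (q c / p c)) + (\<Sum>c<C. rho c * q c) \<le> eps}"
    (is "_ = ?mixtures")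
proof (intro equalityI subsetI)
  fix Q assume "Q \<in> ?mixtures"
  then obtain q \<theta> where Q: "Q = mixture_dist MX nu C xhat q (\<lambda>c. law (\<theta> c))"
    and q: "\<forall>c<C. q c \<ge> 0" "\<forall>c<C. p c = 0 \<longrightarrow> q c = 0" "(\<Sum>c<C. q c) = 1"
    and \<theta>: "\<forall>c<C. \<theta> c \<in> Theta" "\<forall>c<C. KL_div (law (\<theta> c)) (law (thetahat c)) \<le> ereal (rho c)"
    and budget: "(\<Sum>c<C. q c * ln (q c / p c)) + (\<Sum>c<C. rho c * q c) \<le> eps"
    by blast
  have K: "\<forall>c<C. prob_space (law (\<theta> c)) \<and> sets (law (\<theta> c)) = sets nu"
    using \<theta>(1) prob_space_law by simp
  show "Q \<in> ambiguity_set nu h T MX C xhat p thetahat rho eps"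
    unfolding ambiguity_set_def
  proof (intro CollectI conjI exI[of _ "nominal_X MX C xhat q"] exI[of _ \<theta>])
    show "\<forall>c<C. \<forall>A\<in>sets nu. emeasure Q ({xhat c} \<times> A)
        = emeasure (nominal_X MX C xhat q) {xhat c} * emeasure (law (\<theta> c)) A"
      using q(1) by (simp add: Q emeasure_mixture_dist_atom[OF K] emeasure_nominal_X_atom)
    show "KL_div (nominal_X MX C xhat q) (nominal_X MX C xhat p)
        + ereal (\<Sum>c<C. rho c * measure (nominal_X MX C xhat q) {xhat c}) \<le> ereal eps"
      using budget q by (simp add: KL_div_nominal_X[OF p p_sum] measure_nominal_X_atom)
  qed (use Q q \<theta> K in \<open>simp_all add: prob_space_mixture_dist prob_space_nominal_X\<close>)
next
  fix Q assume "Q \<in> ambiguity_set nu h T MX C xhat p thetahat rho eps"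
  then obtain QX \<theta> where Q: "prob_space Q" "sets Q = sets (MX \<Otimes>\<^sub>M nu)"
    and QX: "prob_space QX" "sets QX = sets MX"
    and \<theta>: "\<forall>c<C. \<theta> c \<in> Theta" "\<forall>c<C. KL_div (law (\<theta> c)) (law (thetahat c)) \<le> ereal (rho c)"
    and Q_atom: "\<forall>c<C. \<forall>A\<in>sets nu. emeasure Q ({xhat c} \<times> A) = emeasure QX {xhat c} * emeasure (law (\<theta> c)) A"
    and budget: "KL_div QX (nominal_X MX C xhat p) + ereal (\<Sum>c<C. rho c * measure QX {xhat c}) \<le> ereal eps"
    unfolding ambiguity_set_def by blast
  interpret QX: prob_space QX by (rule QX(1))
  define q where "q c = measure QX {xhat c}" for c
  have "absolutely_continuous (nominal_X MX C xhat p) QX"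
    using budget by (auto simp: KL_div_def split: if_splits)
  note QX_eq = nominal_X_of_absolutely_continuous[OF p QX this, folded q_def]
  have q: "\<forall>c<C. q c \<ge> 0" by (simp add: q_def)
  have "Q = mixture_dist MX nu C xhat q (\<lambda>c. law (\<theta> c))"
    using \<theta>(1) prob_space_law q Q QX_eq(3) Q_atom
    by (intro mixture_dist_unique) (simp_all add: q_def QX.emeasure_eq_measure)
  moreover have "KL_div QX (nominal_X MX C xhat p) = ereal (\<Sum>c<C. q c * ln (q c / p c))"
    by (subst QX_eq(1)) (rule KL_div_nominal_X[OF p p_sum q QX_eq(2)])
  then have "(\<Sum>c<C. q c * ln (q c / p c)) + (\<Sum>c<C. rho c * q c) \<le> eps"
    using budget by (simp add: q_def)
  ultimately show "Q \<in> ?mixtures"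
    using q QX_eq(2,3) \<theta> by blast
qed

end

text \<open>The data of the theorem, with the gradient of \<open>Psi\<close> replaced by \<open>mean\<close>
  (\<open>gradPsi_eq_mean\<close>); \<open>l c\<close> stands for \<open>lambda(w, xhat c)\<close>.\<close>

locale kl_worst_case = expfam_atoms nu h T MX C xhat
  for nu :: "'y measure" and h and T :: "'y \<Rightarrow> 'p::euclidean_space"
    and MX :: "'x measure" and C and xhat +
  fixes p :: "nat \<Rightarrow> real" and thetahat :: "nat \<Rightarrow> 'p" and rho :: "nat \<Rightarrow> real" and eps :: real
    and l :: "nat \<Rightarrow> 'p" and gam :: "nat \<Rightarrow> real" and alpha beta :: real
    and F :: "'x \<times> 'y \<Rightarrow> real" and thetas :: "nat \<Rightarrow> 'p" and t q :: "nat \<Rightarrow> real"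
  assumes p_nonneg: "\<forall>c<C. p c \<ge> 0" and p_sum: "(\<Sum>c<C. p c) = 1"
    and thetahat_in: "\<forall>c<C. thetahat c \<in> Theta"
    and gam_pos: "\<forall>c<C. gam c > 0"
    and thetas_def: "thetas = (\<lambda>c. thetahat c - inverse (gam c) *\<^sub>R l c)"
    and thetas_in: "\<forall>c<C. thetas c \<in> Theta"
    and gam_eq: "\<forall>c<C. Psi (thetas c) + inverse (gam c) * (mean (thetas c) \<bullet> l c) = Psi (thetahat c) - rho c"
    and t_eq: "\<forall>c<C. t c = Psi (l c) - mean (thetas c) \<bullet> l c"
    and beta_pos: "beta > 0"
    and q_def: "q = (\<lambda>c. p c * exp (inverse beta * (t c - alpha) - rho c - 1))"
    and q_sum: "(\<Sum>c<C. q c) = 1"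
    and q_moment: "(\<Sum>c<C. q c * (t c - alpha)) = (eps + 1) * beta"
    and F_measurable: "F \<in> borel_measurable (MX \<Otimes>\<^sub>M nu)"
    and F_atom: "\<forall>c<C. \<forall>y. F (xhat c, y) = Psi (l c) - T y \<bullet> l c"
begin

abbreviation "Qs \<equiv> mixture_dist MX nu C xhat q (\<lambda>c. law (thetas c))"

lemma tilted_mixture_in_ambiguity_set: "Qs \<in> ambiguity_set nu h T MX C xhat p thetahat rho eps"
proof -
  have "\<forall>c<C. KL_div (law (thetas c)) (law (thetahat c)) = ereal (rho c)"
    using thetahat_in thetas_in gam_eq by (auto intro!: KL_div_law_tilted simp: thetas_def)
  moreover have "\<forall>c<C. q c \<ge> 0 \<and> (p c = 0 \<longrightarrow> q c = 0)"
    using p_nonneg by (simp add: q_def)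
  ultimately show ?thesis
    unfolding ambiguity_set_eq[OF p_nonneg p_sum]
    using thetas_in q_sum exp_tilting_budget[OF p_nonneg beta_pos q_def q_sum q_moment]
    by (intro CollectI exI[of _ q] exI[of _ thetas] conjI refl) auto
qed

lemma integral_tilted_mixture:
  shows "integrable Qs F" and "(\<integral>z. F z \<partial>Qs) = (\<Sum>c<C. q c * t c)"
proof -
  have q: "\<forall>c<C. q c \<ge> 0"
    using p_nonneg by (simp add: q_def)
  show "integrable Qs F"
    by (rule integral_mixture_dist_affine(1)[OF q thetas_in F_measurable F_atom])
  show "(\<integral>z. F z \<partial>Qs) = (\<Sum>c<C. q c * t c)"
    using t_eq by (simp add: integral_mixture_dist_affine(2)[OF q thetas_in F_measurable F_atom])
qed

lemma integral_le_tilted_mixture: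
  assumes "Q \<in> ambiguity_set nu h T MX C xhat p thetahat rho eps"
  shows "(\<integral>z. F z \<partial>Q) \<le> (\<integral>z. F z \<partial>Qs)"
proof -
  obtain r \<theta> where Q: "Q = mixture_dist MX nu C xhat r (\<lambda>c. law (\<theta> c))"
    and r: "\<forall>c<C. r c \<ge> 0" "\<forall>c<C. p c = 0 \<longrightarrow> r c = 0" "(\<Sum>c<C. r c) = 1"
    and \<theta>: "\<forall>c<C. \<theta> c \<in> Theta" "\<forall>c<C. KL_div (law (\<theta> c)) (law (thetahat c)) \<le> ereal (rho c)"
    and budget: "(\<Sum>c<C. r c * ln (r c / p c)) + (\<Sum>c<C. rho c * r c) \<le> eps"
    using assms unfolding ambiguity_set_eq[OF p_nonneg p_sum] by blast
  have "(\<integral>z. F z \<partial>Q) = (\<Sum>c<C. r c * (Psi (l c) - mean (\<theta> c) \<bullet> l c))"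
    unfolding Q using r \<theta> F_measurable F_atom by (intro integral_mixture_dist_affine) auto
  also have "\<dots> \<le> (\<Sum>c<C. r c * t c)"
  proof (intro sum_mono mult_left_mono)
    fix c assume "c \<in> {..<C}"
    then have "mean (thetas c) \<bullet> l c \<le> mean (\<theta> c) \<bullet> l c"
      using \<theta> thetahat_in gam_pos thetas_in gam_eq
      by (intro mean_inner_le_of_KL_le) (auto simp: thetas_def)
    then show "Psi (l c) - mean (\<theta> c) \<bullet> l c \<le> t c"
      using t_eq \<open>c \<in> {..<C}\<close> by simp
  qed (use r in auto)
  also have "\<dots> \<le> (\<Sum>c<C. q c * t c)"
    by (rule exp_tilting_maximal[OF p_nonneg beta_pos q_def q_sum q_moment r budget])
  also have "\<dots> = (\<integral>z. F z \<partial>Qs)"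
    by (simp add: integral_tilted_mixture)
  finally show ?thesis .
qed

end

theorem theorem4p5:
  fixes nu :: "'y::euclidean_space measure" and Ycal :: "'y set"
    and h :: "'y \<Rightarrow> real" and T :: "'y \<Rightarrow> 'p::euclidean_space"
    and Xcal :: "'x::euclidean_space set" and Wcal :: "'w::euclidean_space set"
    and lam :: "'w \<Rightarrow> 'x \<Rightarrow> 'p"
    and C :: nat and xhat :: "nat \<Rightarrow> 'x" and phat :: "nat \<Rightarrow> real" and thetahat :: "nat \<Rightarrow> 'p"
    and rho :: "nat \<Rightarrow> real" and eps :: real and w :: 'w
    and gam :: "nat \<Rightarrow> real" and alpha beta :: real
    and thetas :: "nat \<Rightarrow> 'p" and ts :: "nat \<Rightarrow> real"
    and Psi :: "'p \<Rightarrow> real" and gradPsi :: "'p \<Rightarrow> 'p" and MX :: "'x measure"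
  assumes nu_sets: "sets nu = sets (restrict_space borel Ycal)"
    and h_meas: "h \<in> borel_measurable nu" and h_nonneg: "\<forall>y\<in>space nu. h y \<ge> 0"
    and T_meas: "T \<in> borel_measurable nu"
    and regular: "regular_expfam nu h T"
    and Psi_def: "Psi \<equiv> expfam_Psi nu h T"
    and gradPsi_def: "gradPsi \<equiv> expfam_gradPsi nu h T"
    and MX_def: "MX \<equiv> restrict_space borel Xcal"
    and lam_cont: "continuous_on (Wcal \<times> Xcal) (\<lambda>(w, x). lam w x)"
    and lam_Theta: "\<forall>w'\<in>Wcal. \<forall>x\<in>Xcal. lam w' x \<in> expfam_Theta nu h T"
    and xhat_distinct: "inj_on xhat {..<C}"
    and xhat_in: "\<forall>c<C. xhat c \<in> Xcal"
    and phat_nonneg: "\<forall>c<C. phat c \<ge> 0" and phat_sum: "(\<Sum>c<C. phat c) = 1"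
    and thetahat_in: "\<forall>c<C. thetahat c \<in> expfam_Theta nu h T"
    and rho_nonneg: "\<forall>c<C. rho c \<ge> 0" and eps_nonneg: "eps \<ge> 0"
    and budget: "(\<Sum>c<C. phat c * rho c) \<le> eps"
    and w_in: "w \<in> Wcal"
    and gam_pos: "\<forall>c<C. gam c > 0"
    and thetas_def: "thetas \<equiv> (\<lambda>c. thetahat c - inverse (gam c) *\<^sub>R lam w (xhat c))"
    and thetas_in: "\<forall>c<C. thetas c \<in> expfam_Theta nu h T"
    and gam_eq: "\<forall>c<C. Psi (thetas c) + inverse (gam c) * (gradPsi (thetas c) \<bullet> lam w (xhat c))
                        = Psi (thetahat c) - rho c"
    and ts_def: "ts \<equiv> (\<lambda>c. Psi (lam w (xhat c)) - gradPsi (thetas c) \<bullet> lam w (xhat c))"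
    and beta_pos: "beta > 0"
    and eq1: "(\<Sum>c<C. phat c * exp (inverse beta * (ts c - alpha) - rho c - 1)) - 1 = 0"
    and eq2: "(\<Sum>c<C. phat c * (ts c - alpha) * exp (inverse beta * (ts c - alpha) - rho c - 1))
                - (eps + 1) * beta = 0"
  shows "mixture_dist MX nu C xhat
            (\<lambda>c. phat c * exp (inverse beta * (ts c - alpha) - rho c - 1))
            (\<lambda>c. expfam_dist nu h T (thetas c))
           \<in> ambiguity_set nu h T MX C xhat phat thetahat rho eps
       \<and> integrable (mixture_dist MX nu C xhat
            (\<lambda>c. phat c * exp (inverse beta * (ts c - alpha) - rho c - 1))
            (\<lambda>c. expfam_dist nu h T (thetas c))) (\<lambda>(x, y). ell_loss nu h T lam x y w)
       \<and> (\<forall>Q\<in>ambiguity_set nu h T MX C xhat phat thetahat rho eps.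
            (\<integral>z. (\<lambda>(x, y). ell_loss nu h T lam x y w) z \<partial>Q)
            \<le> (\<integral>z. (\<lambda>(x, y). ell_loss nu h T lam x y w) z
                   \<partial>(mixture_dist MX nu C xhat
                       (\<lambda>c. phat c * exp (inverse beta * (ts c - alpha) - rho c - 1))
                       (\<lambda>c. expfam_dist nu h T (thetas c)))))"
proof -
  interpret expfam_atoms nu h T MX C xhat
  proof unfold_locales
    show "C > 0"
      using phat_sum by (cases C) auto
    show "\<forall>c<C. xhat c \<in> space MX" and "\<forall>c<C. {xhat c} \<in> sets MX"
      using xhat_in by (auto simp: MX_def space_restrict_space sets_restrict_space image_iff)
  qed (fact h_meas h_nonneg T_meas regular xhat_distinct)+
  define l where "l c = lam w (xhat c)" for c
  define q where "q = (\<lambda>c. phat c * exp (inverse beta * (ts c - alpha) - rho c - 1))"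
  define F where "F = (\<lambda>(x, y). ell_loss nu h T lam x y w)"
  have grad: "\<forall>c<C. gradPsi (thetas c) = mean (thetas c)"
    using thetas_in by (simp add: gradPsi_def gradPsi_eq_mean)
  interpret kl_worst_case nu h T MX C xhat phat thetahat rho eps l gam alpha beta F thetas ts q
  proof unfold_locales
    show "F \<in> borel_measurable (MX \<Otimes>\<^sub>M nu)"
      unfolding F_def MX_def by (rule ell_loss_measurable[OF lam_cont lam_Theta w_in])
  qed (use phat_nonneg phat_sum thetahat_in gam_pos thetas_in gam_eq grad eq1 eq2 beta_pos in
        \<open>simp_all add: l_def q_def F_def thetas_def ts_def Psi_def ell_loss_def mult_ac\<close>)
  show ?thesis
    unfolding q_def[symmetric] F_def[symmetric]
    using tilted_mixture_in_ambiguity_set integral_tilted_mixture integral_le_tilted_mixture by blast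
qed

end
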